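(* Let $q\equiv 1\pmod 4$ be a prime power and let $n\ge 2$, $k\ge 0$ be integers. If $SP_q$ has property $P(n-1,k)$, then $Tr(SP_q)$ has property $P(n,k)$.
   Context: A signified graph is a simple graph with each edge labelled positive or negative. A signed vector of size $k$ is an element $\alpha=(\alpha_1,\dots,\alpha_k)\in\{+1,-1\}^k$. Given a sequence $X=(v_1,\dots,v_k)$ of $k$ distinct pairwise adjacent vertices, a vertex $u$ is an $\alpha$-successor of $X$ if for each $i$, $uv_i$ is an edge of sign $\alpha_i$; $S^\alpha(X)$ is the set of $\alpha$-successors. A signified graph has property $P(k,l)$ if $|S^\alpha(X)|\ge l$ for every sequence $X$ of $k$ distinct pairwise adjacent vertices and every signed vector $\alpha$ of size $k$. For $x\in\mathbb{F}_q^*$ let $\mathrm{sq}(x)=+1$ if $x$ is a square and $-1$ otherwise. $SP_q$ is the complete graph on $\mathbb{F}_q$ where $xy$ is negative iff $\mathrm{sq}(y-x)=-1$. $Tr(SP_q)$ has vertex set $\{u_i : u\in\mathbb{F}_q\cup\{\infty\},\ i\in\{0,1\}\}$; for $u\ne v$ in $\mathbb{F}_q$, $u_iv_j$ is an edge of sign $\mathrm{sq}(u-v)(-1)^{i+j}$; for $v\in\mathbb{F}_q$, $\infty_iv_j$ is an edge of sign $(-1)^{i+j}$; no other edges. *)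

theory Defs
  imports Main
begin

text \<open>A signified graph on the (finite) vertex type 'v is given by a symmetric,
irreflexive adjacency relation adj and a sign function sg (values +1 / -1),
where sg u v is the sign of the edge uv whenever adj u v holds.\<close>

definition successors :: "('v \<Rightarrow> 'v \<Rightarrow> bool) \<Rightarrow> ('v \<Rightarrow> 'v \<Rightarrow> int) \<Rightarrow> 'v list \<Rightarrow> int list \<Rightarrow> 'v set" where
  "successors adj sg xs \<alpha> =
     {u. \<forall>i < length xs. adj u (xs ! i) \<and> sg u (xs ! i) = \<alpha> ! i}"

definition prop_P :: "('v \<Rightarrow> 'v \<Rightarrow> bool) \<Rightarrow> ('v \<Rightarrow> 'v \<Rightarrow> int) \<Rightarrow> nat \<Rightarrow> nat \<Rightarrow> bool" where
  "prop_P adj sg k l \<longleftrightarrow>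
     (\<forall>xs \<alpha>. length xs = k \<and> distinct xs
        \<and> (\<forall>i < k. \<forall>j < k. i \<noteq> j \<longrightarrow> adj (xs ! i) (xs ! j))
        \<and> length \<alpha> = k \<and> set \<alpha> \<subseteq> {1, -1}
        \<longrightarrow> l \<le> card (successors adj sg xs \<alpha>))"

definition sq :: "'a::field \<Rightarrow> int" where
  "sq x = (if \<exists>y. y ^ 2 = x then 1 else -1)"

definition SP_adj :: "'a::field \<Rightarrow> 'a \<Rightarrow> bool" where
  "SP_adj x y \<longleftrightarrow> x \<noteq> y"

definition SP_sg :: "'a::field \<Rightarrow> 'a \<Rightarrow> int" where
  "SP_sg x y = sq (y - x)"

text \<open>Tr(SP_q): vertex u_i is encoded as (Some u, i) for u in the field and
(None, i) for infinity_i, with i :: bool (False = 0, True = 1).\<close>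
definition bsign :: "bool \<Rightarrow> bool \<Rightarrow> int" where
  "bsign i j = (if i = j then 1 else -1)"  \<comment> \<open>(-1)^(i+j)\<close>

definition Tr_adj :: "'a::field option \<times> bool \<Rightarrow> 'a option \<times> bool \<Rightarrow> bool" where
  "Tr_adj x y = (case (fst x, fst y) of
       (Some u, Some v) \<Rightarrow> u \<noteq> v
     | (None, Some v) \<Rightarrow> True
     | (Some u, None) \<Rightarrow> True
     | (None, None) \<Rightarrow> False)"

definition Tr_sg :: "'a::field option \<times> bool \<Rightarrow> 'a option \<times> bool \<Rightarrow> int" where
  "Tr_sg x y = (case (fst x, fst y) of
       (Some u, Some v) \<Rightarrow> sq (u - v) * bsign (snd x) (snd y)
     | _ \<Rightarrow> bsign (snd x) (snd y))"

end

theory Submission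
  imports Defs
begin

text \<open>Describe an instance of P(n, k) in Tr(SP_q) by the set C of its (vertex, sign) pairs and
  find an injection from the successors of an (n-1)-instance of SP_q into the successors of C.
  If C contains \<infinity>_c, use w \<mapsto> (-w)_a, where a fixes the sign towards \<infinity>_c; the remaining
  constraints at v_j become constraints at -v, since sq (-w - v) = SP_sg w (-v).
  Otherwise fix one constraint at (v0)_j0 and use the map w \<mapsto> v0 + 1/w, sending 0 to \<infinity>;
  a constraint at v_j becomes one at 1/d with d = v - v0, because
  v0 + 1/w - v = w\<inverse> d (d\<inverse> - w) and sq is multiplicative on a finite field.\<close>

lemma sq_in_pm_one: "sq x \<in> {1, -1}"
  by (simp add: sq_def)

lemma sq_mult_self [simp]: "sq x * sq x = 1"
  by (simp add: sq_def)

lemma sq_inverse [simp]: "sq (inverse (x::'a::field)) = sq x"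
proof -
  have "(\<exists>y. y^2 = inverse x) \<longleftrightarrow> (\<exists>y. y^2 = x)"
    by (metis inverse_inverse_eq power_inverse)
  then show ?thesis
    by (simp add: sq_def)
qed

lemma square_if_char_2:
  fixes x :: "'a::{field,finite}"
  assumes "1 + 1 = (0::'a)"
  shows "\<exists>y. y^2 = x"
proof -
  have "inj (\<lambda>y::'a. y^2)"
  proof (rule injI)
    fix y z :: 'a
    assume "y^2 = z^2"
    have "(y - z)^2 = y^2 + z^2 - (1 + 1) * y * z"
      by (simp add: power2_eq_square algebra_simps)
    also have "\<dots> = (1 + 1) * z^2"
      using assms \<open>y^2 = z^2\<close> by (simp add: algebra_simps)
    finally show "y = z"
      using assms by simp
  qed
  then have "surj (\<lambda>y::'a. y^2)"
    by (simp add: finite_UNIV_inj_surj)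
  then show ?thesis
    by (metis surjD)
qed

lemma card_nonzero_eq_twice_card_nonzero_squares:
  assumes "1 + 1 \<noteq> (0::'a::{field,finite})"
  shows "card (- {0::'a}) = 2 * card ((\<lambda>y. y^2) ` (- {0::'a}))"
proof -
  let ?F = "- {0::'a}" and ?S = "(\<lambda>y. y^2) ` (- {0::'a})"
  have "\<forall>y\<in>?F. card {s\<in>?S. y^2 = s} = 1"
  proof
    fix y assume "y \<in> ?F"
    then have "{s\<in>?S. y^2 = s} = {y^2}"
      by auto
    then show "card {s\<in>?S. y^2 = s} = 1"
      by simp
  qed
  then have "(\<Sum>s\<in>?S. card {y\<in>?F. y^2 = s}) = card ?F"
    using sum_multicount[of ?S ?F "\<lambda>s y. y^2 = s" 1] by simp
  then have "card ?F = (\<Sum>s\<in>?S. card {y\<in>?F. y^2 = s})"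
    by simp
  also have "\<dots> = (\<Sum>s\<in>?S. 2)"
  proof (rule sum.cong)
    fix s assume "s \<in> ?S"
    then obtain z where z: "z \<noteq> 0" "s = z^2" by auto
    have "(1 + 1) * z \<noteq> 0"
      using assms z(1) by simp
    then have "z \<noteq> -z"
      by (auto simp: distrib_right)
    have "{y\<in>?F. y^2 = s} = {z, -z}"
      using z by (auto simp: power2_eq_iff)
    then show "card {y\<in>?F. y^2 = s} = 2"
      using \<open>z \<noteq> -z\<close> by simp
  qed simp
  finally show ?thesis
    by simp
qed

lemma square_times_nonzero_square_iff:
  fixes u y :: "'a::field"
  assumes "u \<noteq> 0"
  shows "(\<exists>v. v^2 = u^2 * y) \<longleftrightarrow> (\<exists>v. v^2 = y)"
proof
  assume "\<exists>v. v^2 = u^2 * y"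
  then obtain v where "v^2 = u^2 * y" by blast
  then have "(v / u)^2 = y"
    using assms by (simp add: power_divide)
  then show "\<exists>v. v^2 = y" by blast
next
  assume "\<exists>v. v^2 = y"
  then obtain v where "v^2 = y" by blast
  then have "(u * v)^2 = u^2 * y"
    by (simp add: power_mult_distrib)
  then show "\<exists>v. v^2 = u^2 * y" by blast
qed

lemma nonsquare_times_nonsquare:
  fixes a b :: "'a::{field,finite}"
  assumes "a \<noteq> 0" "b \<noteq> 0" "\<not> (\<exists>y. y^2 = a)" "\<not> (\<exists>y. y^2 = b)"
  shows "\<exists>y. y^2 = a * b"
proof (cases "1 + 1 = (0::'a)")
  case True
  then show ?thesis
    using square_if_char_2 by blast
next
  case False
  let ?F = "- {0::'a}" and ?S = "(\<lambda>y. y^2) ` (- {0::'a})"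
  let ?N = "?F - ?S"
  have "card ?N = card ?S"
    using card_nonzero_eq_twice_card_nonzero_squares[OF False]
    by (subst card_Diff_subset) auto
  moreover have "(*) a ` ?S \<subseteq> ?N"
  proof
    fix t assume "t \<in> (*) a ` ?S"
    then obtain r where "r \<noteq> 0" "t = a * r^2"
      by blast
    then have r: "r \<noteq> 0" "t = r^2 * a"
      by (simp_all add: mult.commute)
    have "t \<notin> ?S"
      using r assms(3) square_times_nonzero_square_iff[OF r(1), of a] by auto
    then show "t \<in> ?N"
      using r assms(1) by simp
  qed
  moreover have "card ((*) a ` ?S) = card ?S"
    using assms(1) by (intro card_image inj_onI) simp
  ultimately have "(*) a ` ?S = ?N"
    by (intro card_subset_eq) auto
  moreover have "b \<in> ?N"
    using assms(2,4) by auto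
  ultimately have "b \<in> (*) a ` ?S"
    by simp
  then obtain r where "b = a * r^2"
    by blast
  then have "a * b = (a * r)^2"
    by (simp add: power2_eq_square)
  then show ?thesis
    by metis
qed

lemma sq_mult:
  fixes x y :: "'a::{field,finite}"
  assumes "x \<noteq> 0" "y \<noteq> 0"
  shows "sq (x * y) = sq x * sq y"
proof -
  have square_factor: "sq (u^2 * z) = sq z" if "u \<noteq> 0" for u z :: 'a
    using square_times_nonzero_square_iff[OF that] by (simp add: sq_def)
  consider (x_square) u where "u^2 = x" | (y_square) u where "u^2 = y"
    | (nonsquares) "\<not> (\<exists>u. u^2 = x)" "\<not> (\<exists>u. u^2 = y)"
    by blast
  then show ?thesis
  proof cases
    case x_square
    then have "sq x = 1" "u \<noteq> 0"
      using assms by (auto simp: sq_def)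
    then show ?thesis
      using x_square square_factor[of u y] by simp
  next
    case y_square
    then have "sq y = 1" "u \<noteq> 0"
      using assms by (auto simp: sq_def)
    then show ?thesis
      using y_square square_factor[of u x] by (simp add: mult.commute)
  next
    case nonsquares
    then show ?thesis
      using nonsquare_times_nonsquare[OF assms nonsquares] by (simp add: sq_def)
  qed
qed

definition successors_set :: "('v \<Rightarrow> 'v \<Rightarrow> bool) \<Rightarrow> ('v \<Rightarrow> 'v \<Rightarrow> int) \<Rightarrow> ('v \<times> int) set \<Rightarrow> 'v set" where
  "successors_set adj sg C = {u. \<forall>(x, s) \<in> C. adj u x \<and> sg u x = s}"

text \<open>A sequence X of pairwise adjacent vertices together with a signed vector \<alpha> is encoded
  as the set of pairs (X_i, \<alpha>_i); the successors do not depend on the order of X.\<close>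

definition clique_constraints :: "('v \<Rightarrow> 'v \<Rightarrow> bool) \<Rightarrow> nat \<Rightarrow> ('v \<times> int) set \<Rightarrow> bool" where
  "clique_constraints adj k C \<longleftrightarrow> finite C \<and> card C = k \<and> inj_on fst C \<and> snd ` C \<subseteq> {1, -1}
     \<and> (\<forall>x \<in> fst ` C. \<forall>y \<in> fst ` C. x \<noteq> y \<longrightarrow> adj x y)"

lemma successors_setI:
  "(\<And>x s. (x, s) \<in> C \<Longrightarrow> adj u x \<and> sg u x = s) \<Longrightarrow> u \<in> successors_set adj sg C"
  by (auto simp: successors_set_def)

lemma successors_setD: "u \<in> successors_set adj sg C \<Longrightarrow> (x, s) \<in> C \<Longrightarrow> adj u x \<and> sg u x = s"
  by (auto simp: successors_set_def)

lemma successors_eq_successors_set_zip: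
  assumes "length xs = length \<alpha>"
  shows "successors adj sg xs \<alpha> = successors_set adj sg (set (zip xs \<alpha>))"
  using assms by (auto simp: successors_def successors_set_def set_zip)

lemma clique_constraints_set_zip:
  fixes \<alpha> :: "int list"
  assumes xs: "length xs = k" "distinct xs" and adj: "\<forall>i<k. \<forall>j<k. i \<noteq> j \<longrightarrow> adj (xs ! i) (xs ! j)"
    and \<alpha>: "length \<alpha> = k" "set \<alpha> \<subseteq> {1, -1}"
  shows "clique_constraints adj k (set (zip xs \<alpha>))"
proof -
  let ?C = "set (zip xs \<alpha>)"
  have "map fst (zip xs \<alpha>) = xs" "map snd (zip xs \<alpha>) = \<alpha>"
    using xs \<alpha> by simp_all
  then have "fst ` ?C = set xs" "snd ` ?C = set \<alpha>" "inj_on fst ?C" "card ?C = k"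
    using xs by (metis set_map, metis set_map, metis distinct_map,
        metis distinct_card distinct_zipI1 length_map)
  moreover have "\<forall>x \<in> set xs. \<forall>y \<in> set xs. x \<noteq> y \<longrightarrow> adj x y"
    using adj xs by (metis in_set_conv_nth)
  ultimately show ?thesis
    using \<alpha> by (simp add: clique_constraints_def)
qed

lemma prop_P_iff_clique_constraints:
  "prop_P adj sg k l \<longleftrightarrow> (\<forall>C. clique_constraints adj k C \<longrightarrow> l \<le> card (successors_set adj sg C))"
proof
  assume P: "prop_P adj sg k l"
  show "\<forall>C. clique_constraints adj k C \<longrightarrow> l \<le> card (successors_set adj sg C)"
  proof (intro allI impI)
    fix C assume C: "clique_constraints adj k C"
    then obtain cs where cs: "set cs = C" "distinct cs"
      by (meson clique_constraints_def finite_distinct_list)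
    let ?xs = "map fst cs"
    have dist: "distinct ?xs"
      using C cs by (simp add: clique_constraints_def distinct_map)
    have len: "length ?xs = k"
      using C cs by (simp add: clique_constraints_def distinct_card[symmetric])
    have "\<forall>i < k. \<forall>j < k. i \<noteq> j \<longrightarrow> adj (?xs ! i) (?xs ! j)"
    proof (intro allI impI)
      fix i j assume "i < k" "j < k" "i \<noteq> j"
      then have "?xs ! i \<noteq> ?xs ! j" "?xs ! i \<in> fst ` C" "?xs ! j \<in> fst ` C"
        using dist len cs(1) nth_mem[of _ ?xs] by (auto simp: nth_eq_iff_index_eq simp del: length_map)
      then show "adj (?xs ! i) (?xs ! j)"
        using C unfolding clique_constraints_def by blast
    qed
    moreover have "set (map snd cs) \<subseteq> {1, -1}"
      using C cs by (simp add: clique_constraints_def)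
    ultimately have "l \<le> card (successors adj sg ?xs (map snd cs))"
      using P dist len unfolding prop_P_def by simp
    then show "l \<le> card (successors_set adj sg C)"
      using cs by (simp add: successors_eq_successors_set_zip zip_map_fst_snd)
  qed
next
  assume Q: "\<forall>C. clique_constraints adj k C \<longrightarrow> l \<le> card (successors_set adj sg C)"
  show "prop_P adj sg k l"
    unfolding prop_P_def
    using Q clique_constraints_set_zip by (metis successors_eq_successors_set_zip)
qed

lemma card_successors_set_le_via_inj:
  fixes \<Phi> :: "'a \<Rightarrow> 'b::finite"
  assumes "inj \<Phi>" "\<And>w. w \<in> successors_set adj sg D \<Longrightarrow> \<Phi> w \<in> successors_set adj' sg' C"
  shows "card (successors_set adj sg D) \<le> card (successors_set adj' sg' C)"
  using assms by (intro card_inj_on_le[of \<Phi>]) (auto intro: inj_on_subset)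

lemma pm_one_mult_self: "s \<in> {1, -1} \<Longrightarrow> s * s = (1::int)"
  by auto

lemma pm_one_mult: "s \<in> {1, -1} \<Longrightarrow> t \<in> {1, -1} \<Longrightarrow> s * t \<in> {1, -1 :: int}"
  by auto

lemma bsign_in_pm_one: "bsign i j \<in> {1, -1}"
  by (simp add: bsign_def)

lemma bsign_mult_self [simp]: "bsign i j * bsign i j = 1"
  by (simp add: bsign_def)

lemma bsign_self [simp]: "bsign i i = 1"
  by (simp add: bsign_def)

lemma bsign_realise: "s \<in> {1, -1} \<Longrightarrow> bsign (s = 1 \<longleftrightarrow> i) j = s * bsign i j"
  by (auto simp: bsign_def)

lemma Tr_adj_simps [simp]:
  "Tr_adj (Some u, i) (Some v, j) \<longleftrightarrow> u \<noteq> v"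
  "Tr_adj (None, i) (Some v, j)"
  "Tr_adj (Some u, i) (None, j)"
  "\<not> Tr_adj (None, i) (None, j)"
  by (simp_all add: Tr_adj_def)

lemma Tr_sg_simps [simp]:
  "Tr_sg (Some u, i) (Some v, j) = sq (u - v) * bsign i j"
  "Tr_sg (None, i) (Some v, j) = bsign i j"
  "Tr_sg (Some u, i) (None, j) = bsign i j"
  by (simp_all add: Tr_sg_def)

lemma Tr_clique_constraints_inj_coordinate:
  assumes "clique_constraints Tr_adj k C"
  shows "inj_on (\<lambda>p. fst (fst p)) C"
proof (rule inj_onI)
  fix p q assume pq: "p \<in> C" "q \<in> C" "fst (fst p) = fst (fst q)"
  have "fst p = fst q"
  proof (rule ccontr)
    assume "fst p \<noteq> fst q"
    then have "Tr_adj (fst p) (fst q)"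
      using assms pq(1,2) unfolding clique_constraints_def by blast
    then show False
      using pq(3) by (cases "fst p", cases "fst q", cases "fst (fst p)") simp_all
  qed
  then show "p = q"
    using assms pq(1,2) unfolding clique_constraints_def by (meson inj_onD)
qed

lemma clique_constraints_SP_transfer:
  fixes C :: "(('a::field option \<times> bool) \<times> int) set" and g :: "'a \<Rightarrow> 'a"
  assumes C: "clique_constraints Tr_adj n C" and "p0 \<in> C"
    and coords: "\<forall>p \<in> C - {p0}. fst (fst p) \<noteq> None" and "inj g"
    and signs: "\<forall>((x, j), s) \<in> C - {p0}. \<sigma> (the x) j s \<in> {1, -1}"
  shows "clique_constraints SP_adj (n - 1) ((\<lambda>((x, j), s). (g (the x), \<sigma> (the x) j s)) ` (C - {p0}))"
    (is "clique_constraints _ _ (?f ` ?R)")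
proof -
  have "inj_on (fst \<circ> ?f) ?R"
  proof (rule inj_onI)
    fix p q assume pq: "p \<in> ?R" "q \<in> ?R" "(fst \<circ> ?f) p = (fst \<circ> ?f) q"
    obtain v j s v' j' t where "p = ((Some v, j), s)" "q = ((Some v', j'), t)"
      using coords pq(1,2) by (metis option.exhaust prod.collapse)
    with pq(3) \<open>inj g\<close> have "fst (fst p) = fst (fst q)"
      by (simp add: inj_eq)
    then show "p = q"
      using Tr_clique_constraints_inj_coordinate[OF C] pq(1,2) by (blast dest: inj_onD)
  qed
  moreover have "snd ` ?f ` ?R \<subseteq> {1, -1}"
    using signs by force
  moreover have "finite ?R" "card ?R = n - 1"
    using C \<open>p0 \<in> C\<close> by (auto simp: clique_constraints_def)
  ultimately show ?thesis
    by (auto simp: clique_constraints_def SP_adj_def card_image dest: inj_on_imageI2 inj_on_imageI)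
qed

lemma Tr_clique_constraints_reduce_at_infinity:
  fixes C :: "(('a::{field,finite} option \<times> bool) \<times> int) set"
  assumes C: "clique_constraints Tr_adj n C" and inf: "((None, c), s0) \<in> C"
  shows "\<exists>D :: ('a \<times> int) set. clique_constraints SP_adj (n - 1) D
           \<and> card (successors_set SP_adj SP_sg D) \<le> card (successors_set Tr_adj Tr_sg C)"
proof -
  let ?R = "C - {((None, c), s0)}"
  have coords: "\<forall>p \<in> ?R. fst (fst p) \<noteq> None"
    using Tr_clique_constraints_inj_coordinate[OF C] inf by (metis DiffE fst_conv inj_onD singletonI)
  have signs: "\<And>x s. (x, s) \<in> C \<Longrightarrow> s \<in> {1, -1}"
    using C unfolding clique_constraints_def by force
  define a where "a = (s0 = 1 \<longleftrightarrow> c)"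
  have a: "bsign a c = s0"
    unfolding a_def using signs[OF inf] by (simp add: bsign_realise)
  let ?D = "(\<lambda>((x, j), s). (- the x, s * bsign a j)) ` ?R"
  have D: "clique_constraints SP_adj (n - 1) ?D"
  proof (rule clique_constraints_SP_transfer[OF C inf coords, where g = uminus and \<sigma> = "\<lambda>_ j s. s * bsign a j"])
    show "inj (uminus :: 'a \<Rightarrow> 'a)"
      by simp
    have "s * bsign a j \<in> {1, -1}" if "((x, j), s) \<in> C" for x j s
      using signs[OF that] bsign_in_pm_one by (rule pm_one_mult)
    then show "\<forall>((x, j), s) \<in> ?R. s * bsign a j \<in> {1, -1}"
      by blast
  qed
  have maps_into: "(Some (- w), a) \<in> successors_set Tr_adj Tr_sg C"
    if w: "w \<in> successors_set SP_adj SP_sg ?D" for w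
  proof (rule successors_setI, clarify)
    fix x j s assume xjs: "((x, j), s) \<in> C"
    show "Tr_adj (Some (- w), a) (x, j) \<and> Tr_sg (Some (- w), a) (x, j) = s"
    proof (cases "((x, j), s) \<in> ?R")
      case False
      then show ?thesis
        using xjs a by simp
    next
      case True
      then have "x \<noteq> None"
        using coords by (metis fst_conv)
      then obtain v where x: "x = Some v"
        by blast
      have "(- v, s * bsign a j) \<in> ?D"
        using True x by force
      then have "w \<noteq> - v" "sq (- v - w) = s * bsign a j"
        using successors_setD[OF w] by (simp_all add: SP_adj_def SP_sg_def)
      moreover from this(2) have "sq (- w - v) = s * bsign a j"
        by (subst minus_diff_commute)
      ultimately show ?thesis
        using x by (auto simp: mult.assoc)
    qed
  qed
  have "inj (\<lambda>w::'a. (Some (- w), a))"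
    by (simp add: inj_def)
  then have "card (successors_set SP_adj SP_sg ?D) \<le> card (successors_set Tr_adj Tr_sg C)"
    using maps_into by (rule card_successors_set_le_via_inj)
  with D show ?thesis
    by blast
qed

text \<open>The copy index is chosen so that the edge to (v0)_j0 has sign s0.\<close>

definition Tr_inversion_at :: "'a::field \<Rightarrow> bool \<Rightarrow> int \<Rightarrow> 'a \<Rightarrow> 'a option \<times> bool" where
  "Tr_inversion_at v0 j0 s0 w =
     (if w = 0 then (None, s0 = 1 \<longleftrightarrow> j0) else (Some (v0 + inverse w), s0 * sq w = 1 \<longleftrightarrow> j0))"

lemma inj_Tr_inversion_at: "inj (Tr_inversion_at v0 j0 s0)"
  by (auto simp: Tr_inversion_at_def inj_def)

lemma Tr_inversion_at_base:
  assumes "s0 \<in> {1, -1}"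
  shows "Tr_adj (Tr_inversion_at v0 j0 s0 w) (Some v0, j0)
    \<and> Tr_sg (Tr_inversion_at v0 j0 s0 w) (Some v0, j0) = s0"
proof -
  have "s0 * sq w \<in> {1, -1}"
    using assms sq_in_pm_one[of w] by auto
  then show ?thesis
    using assms by (simp add: Tr_inversion_at_def bsign_realise mult.left_commute)
qed

lemma Tr_inversion_at_successor:
  fixes v v0 w :: "'a::{field,finite}"
  assumes s0: "s0 \<in> {1, -1}" and s: "s \<in> {1, -1}" and d: "v = v0 + d" "d \<noteq> 0"
    and w: "w \<noteq> inverse d" "sq (inverse d - w) = s0 * s * bsign j0 j * sq d"
  shows "Tr_adj (Tr_inversion_at v0 j0 s0 w) (Some v, j) \<and> Tr_sg (Tr_inversion_at v0 j0 s0 w) (Some v, j) = s"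
proof (cases "w = 0")
  case True
  have "Tr_sg (Tr_inversion_at v0 j0 s0 w) (Some v, j) = s0 * bsign j0 j"
    using True s0 by (simp add: Tr_inversion_at_def bsign_realise)
  also have "\<dots> = (s0 * s * bsign j0 j) * s"
    using s by auto
  also have "\<dots> = s"
    using w(2) True sq_in_pm_one[of d] by auto
  finally show ?thesis
    using True by (simp add: Tr_inversion_at_def)
next
  case False
  have eq: "v0 + inverse w - v = inverse w * d * (inverse d - w)"
    using False d by (simp add: field_simps)
  have "inverse d - w \<noteq> 0"
    using w(1) by simp
  then have adj: "v0 + inverse w \<noteq> v"
    using eq False d by auto
  have "sq (v0 + inverse w - v) = sq w * sq d * sq (inverse d - w)"
    using eq False d \<open>inverse d - w \<noteq> 0\<close> by (simp add: sq_mult)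
  moreover have "s0 * sq w \<in> {1, -1}"
    using s0 sq_in_pm_one[of w] by auto
  ultimately have "Tr_sg (Tr_inversion_at v0 j0 s0 w) (Some v, j)
      = sq w * sq d * (s0 * s * bsign j0 j * sq d) * (s0 * sq w * bsign j0 j)"
    using False w(2) by (simp add: Tr_inversion_at_def bsign_realise)
  also have "\<dots> = (sq w * sq w) * (sq d * sq d) * (s0 * s0) * (bsign j0 j * bsign j0 j) * s"
    by (simp add: ac_simps)
  also have "\<dots> = s"
    using s0 by (simp add: pm_one_mult_self)
  finally show ?thesis
    using adj False by (simp add: Tr_inversion_at_def)
qed

lemma Tr_clique_constraints_reduce_finite:
  fixes C :: "(('a::{field,finite} option \<times> bool) \<times> int) set"
  assumes C: "clique_constraints Tr_adj n C" and p0: "((Some v0, j0), s0) \<in> C"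
    and no_inf: "\<forall>p \<in> C. fst (fst p) \<noteq> None"
  shows "\<exists>D :: ('a \<times> int) set. clique_constraints SP_adj (n - 1) D
           \<and> card (successors_set SP_adj SP_sg D) \<le> card (successors_set Tr_adj Tr_sg C)"
proof -
  let ?R = "C - {((Some v0, j0), s0)}"
  have R_coord: "\<exists>v j s. p = ((Some v, j), s) \<and> v \<noteq> v0" if "p \<in> ?R" for p
  proof -
    have "fst (fst p) \<noteq> Some v0"
      using that Tr_clique_constraints_inj_coordinate[OF C] p0
      by (metis DiffE fst_conv inj_onD singletonI)
    then show ?thesis
      using that no_inf by (metis DiffD1 option.exhaust prod.collapse)
  qed
  have signs: "\<And>x s. (x, s) \<in> C \<Longrightarrow> s \<in> {1, -1}"
    using C unfolding clique_constraints_def by force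
  let ?D = "(\<lambda>((x, j), s). (inverse (the x - v0), s0 * s * bsign j0 j * sq (the x - v0))) ` ?R"
  have D: "clique_constraints SP_adj (n - 1) ?D"
  proof (rule clique_constraints_SP_transfer[OF C p0, where g = "\<lambda>v. inverse (v - v0)"
        and \<sigma> = "\<lambda>v j s. s0 * s * bsign j0 j * sq (v - v0)"])
    show "\<forall>p \<in> ?R. fst (fst p) \<noteq> None"
      using no_inf by blast
    show "inj (\<lambda>v. inverse (v - v0))"
      by (simp add: inj_def)
    have "s0 * s * bsign j0 j * sq (the x - v0) \<in> {1, -1}" if "((x, j), s) \<in> C" for x j s
      using signs[OF p0] signs[OF that] bsign_in_pm_one sq_in_pm_one by (intro pm_one_mult)
    then show "\<forall>((x, j), s) \<in> ?R. s0 * s * bsign j0 j * sq (the x - v0) \<in> {1, -1}"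
      by blast
  qed
  have maps_into: "Tr_inversion_at v0 j0 s0 w \<in> successors_set Tr_adj Tr_sg C"
    if w: "w \<in> successors_set SP_adj SP_sg ?D" for w
  proof (rule successors_setI, clarify)
    fix x j s assume xjs: "((x, j), s) \<in> C"
    show "Tr_adj (Tr_inversion_at v0 j0 s0 w) (x, j) \<and> Tr_sg (Tr_inversion_at v0 j0 s0 w) (x, j) = s"
    proof (cases "((x, j), s) \<in> ?R")
      case False
      then show ?thesis
        using xjs signs[OF p0] Tr_inversion_at_base by auto
    next
      case True
      then obtain v where x: "x = Some v" and "v \<noteq> v0"
        using R_coord by blast
      have "(inverse (v - v0), s0 * s * bsign j0 j * sq (v - v0)) \<in> ?D"
        using True x by force
      then have "w \<noteq> inverse (v - v0)" "sq (inverse (v - v0) - w) = s0 * s * bsign j0 j * sq (v - v0)"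
        using successors_setD[OF w] by (simp_all add: SP_adj_def SP_sg_def)
      then show ?thesis
        unfolding x
        by (rule Tr_inversion_at_successor[where d = "v - v0", rotated -2])
          (use signs[OF p0] signs[OF xjs] \<open>v \<noteq> v0\<close> in simp_all)
    qed
  qed
  have "card (successors_set SP_adj SP_sg ?D) \<le> card (successors_set Tr_adj Tr_sg C)"
    using inj_Tr_inversion_at maps_into by (rule card_successors_set_le_via_inj)
  with D show ?thesis
    by blast
qed

lemma Tr_clique_constraints_reduce_to_SP:
  fixes C :: "(('a::{field,finite} option \<times> bool) \<times> int) set"
  assumes C: "clique_constraints Tr_adj n C" and "n \<ge> 1"
  shows "\<exists>D :: ('a \<times> int) set. clique_constraints SP_adj (n - 1) D
           \<and> card (successors_set SP_adj SP_sg D) \<le> card (successors_set Tr_adj Tr_sg C)"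
proof (cases "\<exists>p \<in> C. fst (fst p) = None")
  case True
  then obtain c s0 where "((None, c), s0) \<in> C"
    by (metis prod.collapse)
  then show ?thesis
    by (rule Tr_clique_constraints_reduce_at_infinity[OF C])
next
  case False
  have "C \<noteq> {}"
    using C \<open>n \<ge> 1\<close> by (auto simp: clique_constraints_def)
  then obtain v0 j0 s0 where "((Some v0, j0), s0) \<in> C"
    using False by (metis all_not_in_conv option.exhaust prod.collapse)
  then show ?thesis
    using False by (intro Tr_clique_constraints_reduce_finite[OF C]) auto
qed

theorem mainTheorem8:
  fixes n k :: nat
  assumes "card (UNIV :: 'a::{field,finite} set) mod 4 = 1"
    and "n \<ge> 2"
    and "prop_P (SP_adj :: 'a \<Rightarrow> 'a \<Rightarrow> bool) SP_sg (n - 1) k"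
  shows "prop_P (Tr_adj :: 'a option \<times> bool \<Rightarrow> _ \<Rightarrow> bool) Tr_sg n k"
  unfolding prop_P_iff_clique_constraints
proof (intro allI impI)
  fix C :: "(('a option \<times> bool) \<times> int) set"
  assume "clique_constraints Tr_adj n C"
  then obtain D :: "('a \<times> int) set" where D: "clique_constraints SP_adj (n - 1) D"
    and le: "card (successors_set SP_adj SP_sg D) \<le> card (successors_set Tr_adj Tr_sg C)"
    using Tr_clique_constraints_reduce_to_SP \<open>n \<ge> 2\<close> by fastforce
  have "k \<le> card (successors_set SP_adj SP_sg D)"
    using assms(3) D by (simp add: prop_P_iff_clique_constraints)
  also note le
  finally show "k \<le> card (successors_set Tr_adj Tr_sg C)" .
qed

end
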